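(* Let $n\ge3$ be an integer, let $z>0$ satisfy $z+\sigma^2-2D\ge0$ and $h(z)\le1$, and let $x^n\in\mathbb R^n$ with $\frac1n\|x^n\|^2=z$. If $Y^n$ is uniformly distributed on the sphere $\{y^n\in\mathbb R^n:\|y^n\|^2=n(\sigma^2-D)\}$, then $$\Pr\{\|x^n-Y^n\|^2\le nD\}\le\frac{1}{\sqrt\pi}\,\frac{\Gamma(\frac n2)}{\Gamma(\frac{n-1}{2})}\,\big(1-h(z)\big)^{\frac{n-3}{2}}.$$
   Context: Fix $\sigma^2>D>0$ and let $P_Y:=\sigma^2-D$. For $z>0$ define $h(z):=\frac{(z+P_Y-D)^2}{4zP_Y}$. $\Gamma$ is the Gamma function. *)

theory Defs
  imports "HOL-Analysis.Analysis"
begin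

definition hfun :: "real \<Rightarrow> real \<Rightarrow> real \<Rightarrow> real" where
  "hfun \<sigma> D z = (let PY = \<sigma>\<^sup>2 - D in (z + PY - D)\<^sup>2 / (4 * z * PY))"

text \<open>Uniform (normalized surface / cone) probability measure on the sphere of
  radius r centred at 0: the push-forward of the uniform distribution on the
  ball of radius r under radial projection v \<mapsto> (r / |v|) v.\<close>
definition unif_sphere :: "real \<Rightarrow> 'a::euclidean_space measure" where
  "unif_sphere r = distr (uniform_measure lborel (ball 0 r)) borel (\<lambda>v. (r / norm v) *\<^sub>R v)"

end

theory Submission
  imports Defs
begin

text \<open>Under radial projection the uniform distribution on the sphere of radius
  r = sqrt (n P_Y) is the image of the uniform distribution on the ball of radius r. A point v of
  the ball is projected into the event |x - Y|^2 <= nD only if the angle between v and x has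
  cosine at least c = (z + P_Y - D) / (2 sqrt (z P_Y)), and c^2 = h(z). Hence the probability is at
  most the volume of the solid cone of radius r around x with this opening, divided by the
  volume V_n r^n of the ball. The slice of the cone at height y along its axis is an
  (n-1)-ball of radius at most min (sqrt (r^2 - y^2)) (r s), s = sqrt (1 - h(z)), so the cone has
  volume at most V_(n-1) (r s)^(n-3) 2r^3/3. Finally
  V_(n-1) / V_n = n/(n-1) Gamma(n/2) / (sqrt pi Gamma((n-1)/2)) and 2n / (3(n-1)) <= 1.\<close>

definition PiM_cball :: "'i set \<Rightarrow> real \<Rightarrow> ('i \<Rightarrow> real) set" where
  "PiM_cball A \<rho> = {f. sqrt (\<Sum>i\<in>A. (f i)\<^sup>2) \<le> \<rho>} \<inter> space (Pi\<^sub>M A (\<lambda>_. lborel))"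

definition PiM_cone :: "'i set \<Rightarrow> 'i \<Rightarrow> real \<Rightarrow> real \<Rightarrow> ('i \<Rightarrow> real) set" where
  "PiM_cone B e c r =
     {f. sqrt (\<Sum>i\<in>B. (f i)\<^sup>2) \<le> r \<and> c * sqrt (\<Sum>i\<in>B. (f i)\<^sup>2) \<le> f e}
       \<inter> space (Pi\<^sub>M B (\<lambda>_. lborel))"

text \<open>Unlike \<open>emeasure_cball_aux\<close>, the radius may be zero.\<close>

lemma emeasure_PiM_cball_le:
  assumes "finite A" "A \<noteq> {}" "\<rho> \<ge> 0"
  shows "emeasure (Pi\<^sub>M A (\<lambda>_. lborel)) (PiM_cball A \<rho>) \<le> ennreal (unit_ball_vol (card A) * \<rho> ^ card A)"
proof (cases "\<rho> = 0")
  case False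
  then show ?thesis
    using assms unfolding PiM_cball_def by (subst emeasure_cball_aux) auto
next
  case True
  define V where "V = unit_ball_vol (card A)"
  have "card A > 0" "V > 0"
    using assms by (simp_all add: card_gt_0_iff V_def)
  show ?thesis
  proof (rule ennreal_le_epsilon)
    fix e :: real assume "e > 0"
    define \<epsilon> where "\<epsilon> = min 1 (e / V)"
    have \<epsilon>: "0 < \<epsilon>" "\<epsilon> \<le> 1" "V * \<epsilon> \<le> e"
      using \<open>e > 0\<close> \<open>V > 0\<close> by (auto simp: \<epsilon>_def min_def field_simps)
    have "V * \<epsilon> ^ card A \<le> V * \<epsilon>"
      using \<epsilon> \<open>V > 0\<close> \<open>card A > 0\<close> by (simp add: power_le_one_iff power_decreasing[of 1, simplified])
    have "emeasure (Pi\<^sub>M A (\<lambda>_. lborel)) (PiM_cball A \<rho>)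
        \<le> emeasure (Pi\<^sub>M A (\<lambda>_. lborel)) (PiM_cball A \<epsilon>)"
      using True \<epsilon> unfolding PiM_cball_def
      by (intro emeasure_mono) (auto intro: order_trans[OF real_sqrt_le_mono[of _ 0]])
    also have "\<dots> = ennreal (V * \<epsilon> ^ card A)"
      using assms \<epsilon> unfolding V_def PiM_cball_def by (subst emeasure_cball_aux) auto
    also have "\<dots> \<le> ennreal e"
      using \<open>V * \<epsilon> ^ card A \<le> V * \<epsilon>\<close> \<epsilon> by (intro ennreal_leI) linarith
    finally show "emeasure (Pi\<^sub>M A (\<lambda>_. lborel)) (PiM_cball A \<rho>)
        \<le> ennreal (unit_ball_vol (card A) * \<rho> ^ card A) + ennreal e"
      using True \<open>card A > 0\<close> by (simp add: power_0_left)
  qed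
qed

lemma emeasure_PiM_cball_slice_le:
  assumes "finite A" "card A \<ge> 2" "0 \<le> y" "y \<le> r" "0 \<le> s"
  shows "emeasure (Pi\<^sub>M A (\<lambda>_. lborel)) (PiM_cball A (sqrt (min (r\<^sup>2 - y\<^sup>2) ((r * s)\<^sup>2))))
         \<le> ennreal (unit_ball_vol (card A) * (r * s) ^ (card A - 2) * (r\<^sup>2 - y\<^sup>2))"
proof -
  define \<rho> where "\<rho> = sqrt (min (r\<^sup>2 - y\<^sup>2) ((r * s)\<^sup>2))"
  have "y\<^sup>2 \<le> r\<^sup>2" using assms by (intro power_mono) auto
  then have \<rho>: "0 \<le> \<rho>" "\<rho> \<le> r * s" "\<rho>\<^sup>2 \<le> r\<^sup>2 - y\<^sup>2"
    using assms by (auto simp: \<rho>_def real_sqrt_le_iff')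
  have "\<rho> ^ card A = \<rho> ^ (card A - 2) * \<rho>\<^sup>2"
    using assms(2) by (metis le_add_diff_inverse2 power_add)
  also have "\<dots> \<le> (r * s) ^ (card A - 2) * (r\<^sup>2 - y\<^sup>2)"
    using \<rho> by (intro mult_mono power_mono) auto
  finally have "\<rho> ^ card A \<le> (r * s) ^ (card A - 2) * (r\<^sup>2 - y\<^sup>2)" .
  have "A \<noteq> {}" using assms(2) by auto
  have "emeasure (Pi\<^sub>M A (\<lambda>_. lborel)) (PiM_cball A \<rho>) \<le> ennreal (unit_ball_vol (card A) * \<rho> ^ card A)"
    by (rule emeasure_PiM_cball_le[OF \<open>finite A\<close> \<open>A \<noteq> {}\<close> \<open>0 \<le> \<rho>\<close>])
  also have "\<dots> \<le> ennreal (unit_ball_vol (card A) * (r * s) ^ (card A - 2) * (r\<^sup>2 - y\<^sup>2))"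
    using \<open>\<rho> ^ card A \<le> _\<close> by (intro ennreal_leI) (simp add: mult.assoc mult_left_mono)
  finally show ?thesis unfolding \<rho>_def .
qed

lemma nn_integral_square_diff_interval:
  assumes "r > 0"
  shows "(\<integral>\<^sup>+y. ennreal (r\<^sup>2 - y\<^sup>2) * indicator {0..r} y \<partial>lborel) = ennreal (2/3 * r^3)"
proof -
  have "((\<lambda>y. r\<^sup>2 - y\<^sup>2) has_integral ((\<lambda>y. r\<^sup>2 * y - y^3/3) r - (\<lambda>y. r\<^sup>2 * y - y^3/3) 0)) {0..r}"
    using assms
    by (intro fundamental_theorem_of_calculus)
       (auto intro!: derivative_eq_intros
             simp: has_real_derivative_iff_has_vector_derivative[symmetric] power2_eq_square)
  then have "((\<lambda>y. r\<^sup>2 - y\<^sup>2) has_integral (2/3 * r^3)) {0..r}"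
    by (simp add: power2_eq_square power3_eq_cube algebra_simps)
  then show ?thesis
    by (intro nn_integral_has_integral_lebesgue') (auto simp: abs_le_square_iff power_mono)
qed

lemma sets_PiM_cone:
  assumes "e \<in> B"
  shows "PiM_cone B e c r \<in> sets (Pi\<^sub>M B (\<lambda>_. lborel))"
proof -
  let ?M = "Pi\<^sub>M B (\<lambda>_. lborel)"
  have coord: "(\<lambda>f. f i) \<in> borel_measurable ?M" if "i \<in> B" for i
    using measurable_component_singleton[OF that, of "\<lambda>_. lborel"] by simp
  have "(\<lambda>f. sqrt (\<Sum>i\<in>B. (f i)\<^sup>2)) \<in> borel_measurable ?M"
    by (intro borel_measurable_continuous_on[where f=sqrt] borel_measurable_sum
        borel_measurable_power coord continuous_intros) auto
  then have "{f \<in> space ?M. sqrt (\<Sum>i\<in>B. (f i)\<^sup>2) \<le> r}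
      \<inter> {f \<in> space ?M. c * sqrt (\<Sum>i\<in>B. (f i)\<^sup>2) \<le> f e} \<in> sets ?M"
    using coord[OF \<open>e \<in> B\<close>]
    by (intro sets.Int borel_measurable_le borel_measurable_times borel_measurable_const) auto
  moreover have "PiM_cone B e c r = {f \<in> space ?M. sqrt (\<Sum>i\<in>B. (f i)\<^sup>2) \<le> r}
      \<inter> {f \<in> space ?M. c * sqrt (\<Sum>i\<in>B. (f i)\<^sup>2) \<le> f e}"
    by (auto simp: PiM_cone_def)
  ultimately show ?thesis by simp
qed

lemma cone_slice_bound:
  assumes c: "0 \<le> c" "c \<le> 1" and "r > 0" "W \<ge> 0"
    and in_ball: "sqrt (y\<^sup>2 + W) \<le> r" and in_cone: "c * sqrt (y\<^sup>2 + W) \<le> y"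
  shows "0 \<le> y" "y \<le> r" "W \<le> r\<^sup>2 - y\<^sup>2" "W \<le> (r * sqrt (1 - c\<^sup>2))\<^sup>2"
proof -
  have "0 \<le> c * sqrt (y\<^sup>2 + W)" using c \<open>W \<ge> 0\<close> by simp
  then show "0 \<le> y" using in_cone by linarith
  have ball: "y\<^sup>2 + W \<le> r\<^sup>2" using in_ball \<open>r > 0\<close> \<open>W \<ge> 0\<close> by (simp add: real_sqrt_le_iff')
  then show "W \<le> r\<^sup>2 - y\<^sup>2" by linarith
  show "y \<le> r" using power2_le_imp_le[of y r] ball \<open>r > 0\<close> \<open>W \<ge> 0\<close> by linarith
  have "(c * sqrt (y\<^sup>2 + W))\<^sup>2 \<le> y\<^sup>2"
    using in_cone c \<open>W \<ge> 0\<close> by (intro power_mono) auto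
  then have cone: "c\<^sup>2 * y\<^sup>2 + c\<^sup>2 * W \<le> y\<^sup>2"
    using \<open>W \<ge> 0\<close> by (simp add: power_mult_distrib distrib_left)
  have "W \<le> r\<^sup>2 * (1 - c\<^sup>2)"
  proof (cases "y \<ge> c * r")
    case True
    then have "(c * r)\<^sup>2 \<le> y\<^sup>2" using c \<open>r > 0\<close> by (intro power_mono) auto
    moreover have "(c * r)\<^sup>2 = r\<^sup>2 - r\<^sup>2 * (1 - c\<^sup>2)" by (simp add: power_mult_distrib algebra_simps)
    ultimately show ?thesis using ball by linarith
  next
    case False
    then have "y\<^sup>2 \<le> (c * r)\<^sup>2" using \<open>0 \<le> y\<close> by (intro power_mono) auto
    moreover have "0 \<le> 1 - c\<^sup>2" using c by (simp add: power_le_one)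
    ultimately have "y\<^sup>2 * (1 - c\<^sup>2) \<le> (c * r)\<^sup>2 * (1 - c\<^sup>2)" by (rule mult_right_mono)
    moreover have "y\<^sup>2 * (1 - c\<^sup>2) = y\<^sup>2 - c\<^sup>2 * y\<^sup>2" "(c * r)\<^sup>2 * (1 - c\<^sup>2) = c\<^sup>2 * (r\<^sup>2 * (1 - c\<^sup>2))"
      by (simp_all add: power_mult_distrib algebra_simps)
    ultimately have "c\<^sup>2 * W \<le> c\<^sup>2 * (r\<^sup>2 * (1 - c\<^sup>2))"
      using cone by linarith
    moreover have "c > 0" using False \<open>0 \<le> y\<close> \<open>r > 0\<close> c by (cases "c = 0") auto
    ultimately show ?thesis by simp
  qed
  moreover have "(r * sqrt (1 - c\<^sup>2))\<^sup>2 = r\<^sup>2 * (1 - c\<^sup>2)"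
    using c by (simp add: power_mult_distrib power_le_one)
  ultimately show "W \<le> (r * sqrt (1 - c\<^sup>2))\<^sup>2" by simp
qed

lemma PiM_cone_slice:
  assumes "finite A" "e \<notin> A" "0 \<le> c" "c \<le> 1" "r > 0"
    and x: "x \<in> space (Pi\<^sub>M A (\<lambda>_. lborel))" and cone: "x(e := y) \<in> PiM_cone (insert e A) e c r"
  shows "y \<in> {0..r}" "x \<in> PiM_cball A (sqrt (min (r\<^sup>2 - y\<^sup>2) ((r * sqrt (1 - c\<^sup>2))\<^sup>2)))"
proof -
  have "(\<Sum>i\<in>insert e A. ((x(e := y)) i)\<^sup>2) = y\<^sup>2 + (\<Sum>i\<in>A. (x i)\<^sup>2)"
    using assms(1,2) by (simp add: sum.insert) (intro sum.cong, auto)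
  with cone have "sqrt (y\<^sup>2 + (\<Sum>i\<in>A. (x i)\<^sup>2)) \<le> r" "c * sqrt (y\<^sup>2 + (\<Sum>i\<in>A. (x i)\<^sup>2)) \<le> y"
    by (auto simp: PiM_cone_def)
  note bounds = cone_slice_bound[OF \<open>0 \<le> c\<close> \<open>c \<le> 1\<close> \<open>r > 0\<close> sum_nonneg this]
  then show "y \<in> {0..r}" by simp
  have "sqrt (\<Sum>i\<in>A. (x i)\<^sup>2) \<le> sqrt (min (r\<^sup>2 - y\<^sup>2) ((r * sqrt (1 - c\<^sup>2))\<^sup>2))"
    using bounds(3,4) by (intro real_sqrt_le_mono) simp
  then show "x \<in> PiM_cball A (sqrt (min (r\<^sup>2 - y\<^sup>2) ((r * sqrt (1 - c\<^sup>2))\<^sup>2)))"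
    using x by (simp add: PiM_cball_def)
qed

lemma nn_integral_PiM_cone_slice_le:
  assumes "finite A" "e \<notin> A" "card A \<ge> 2" "r > 0" "0 \<le> c" "c \<le> 1"
  shows "(\<integral>\<^sup>+x. indicator (PiM_cone (insert e A) e c r) (x(e := y)) \<partial>Pi\<^sub>M A (\<lambda>_. lborel))
    \<le> ennreal (unit_ball_vol (card A) * (r * sqrt (1 - c\<^sup>2)) ^ (card A - 2))
        * (ennreal (r\<^sup>2 - y\<^sup>2) * indicator {0..r} y)"
proof (cases "y \<in> {0..r}")
  case True
  define s where "s = sqrt (1 - c\<^sup>2)"
  define \<rho> where "\<rho> = sqrt (min (r\<^sup>2 - y\<^sup>2) ((r * s)\<^sup>2))"
  define K where "K = unit_ball_vol (card A) * (r * s) ^ (card A - 2)"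
  have "0 \<le> s" using assms by (simp add: s_def power_le_one)
  from True have "0 \<le> y" "y \<le> r" by auto
  have "(\<integral>\<^sup>+x. indicator (PiM_cone (insert e A) e c r) (x(e := y)) \<partial>Pi\<^sub>M A (\<lambda>_. lborel))
      \<le> (\<integral>\<^sup>+x. indicator (PiM_cball A \<rho>) x \<partial>Pi\<^sub>M A (\<lambda>_. lborel))"
    using PiM_cone_slice[OF assms(1,2,5,6,4)]
    by (intro nn_integral_mono) (auto simp: indicator_def \<rho>_def s_def)
  also have "\<dots> = emeasure (Pi\<^sub>M A (\<lambda>_. lborel)) (PiM_cball A \<rho>)"
    by (intro nn_integral_indicator) (simp add: PiM_cball_def)
  also have "\<dots> \<le> ennreal (K * (r\<^sup>2 - y\<^sup>2))"
    using emeasure_PiM_cball_slice_le[OF \<open>finite A\<close> \<open>card A \<ge> 2\<close> \<open>0 \<le> y\<close> \<open>y \<le> r\<close> \<open>0 \<le> s\<close>]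
    unfolding \<rho>_def K_def .
  also have "\<dots> = ennreal K * ennreal (r\<^sup>2 - y\<^sup>2)"
  proof (rule ennreal_mult)
    show "0 \<le> K" using \<open>r > 0\<close> \<open>0 \<le> s\<close> by (simp add: K_def)
    show "0 \<le> r\<^sup>2 - y\<^sup>2" using power_mono[OF \<open>y \<le> r\<close> \<open>0 \<le> y\<close>, of 2] by simp
  qed
  finally show ?thesis using True by (simp add: K_def s_def)
next
  case False
  then have notin: "x(e := y) \<notin> PiM_cone (insert e A) e c r" if "x \<in> space (Pi\<^sub>M A (\<lambda>_. lborel))" for x
    using PiM_cone_slice(1)[OF assms(1,2,5,6,4) that] by blast
  have "(\<integral>\<^sup>+x. indicator (PiM_cone (insert e A) e c r) (x(e := y)) \<partial>Pi\<^sub>M A (\<lambda>_. lborel))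
      = (\<integral>\<^sup>+x. 0 \<partial>Pi\<^sub>M A (\<lambda>_. lborel :: real measure))"
    by (rule nn_integral_cong) (simp add: notin)
  then show ?thesis by simp
qed

lemma emeasure_PiM_cone_le:
  assumes "finite B" "e \<in> B" "card B \<ge> 3" "r > 0" "0 \<le> c" "c \<le> 1"
  shows "emeasure (Pi\<^sub>M B (\<lambda>_. lborel)) (PiM_cone B e c r)
    \<le> ennreal (unit_ball_vol (card B - 1) * (r * sqrt (1 - c\<^sup>2)) ^ (card B - 3) * (2/3 * r ^ 3))"
proof -
  interpret product_sigma_finite "\<lambda>_. lborel" ..
  define A where "A = B - {e}"
  define K where "K = unit_ball_vol (card A) * (r * sqrt (1 - c\<^sup>2)) ^ (card A - 2)"
  have B: "B = insert e A" "e \<notin> A" "finite A"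
    using assms by (auto simp: A_def)
  have card_A: "card A \<ge> 2" "card A = card B - 1" "card B - 1 - 2 = card B - 3"
    using assms by (auto simp: A_def)
  have "emeasure (Pi\<^sub>M B (\<lambda>_. lborel)) (PiM_cone B e c r)
      = (\<integral>\<^sup>+y. \<integral>\<^sup>+x. indicator (PiM_cone B e c r) (x(e := y)) \<partial>Pi\<^sub>M A (\<lambda>_. lborel) \<partial>lborel)"
    using sets_PiM_cone[OF \<open>e \<in> B\<close>, of c r] B
    by (simp add: product_nn_integral_insert_rev[symmetric] del: insert_Diff_single)
  also have "\<dots> \<le> (\<integral>\<^sup>+y. ennreal K * (ennreal (r\<^sup>2 - y\<^sup>2) * indicator {0..r} y) \<partial>lborel)"
    using nn_integral_PiM_cone_slice_le[OF B(3,2) card_A(1) assms(4-6)] B(1)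
    unfolding K_def by (intro nn_integral_mono) simp
  also have "\<dots> = ennreal K * ennreal (2/3 * r ^ 3)"
    using nn_integral_square_diff_interval[OF \<open>r > 0\<close>] by (simp add: nn_integral_cmult)
  also have "\<dots> = ennreal (K * (2/3 * r ^ 3))"
    using assms by (intro ennreal_mult[symmetric]) (auto simp: K_def power_le_one)
  finally show ?thesis
    unfolding K_def card_A(2,3) .
qed

text \<open>\<open>c\<close> is the cosine of the half-opening angle of the cone around the axis \<open>a\<close>.\<close>

definition solid_cone :: "'a::real_inner \<Rightarrow> real \<Rightarrow> real \<Rightarrow> 'a set" where
  "solid_cone a c r = {v. norm v \<le> r \<and> c * norm a * norm v \<le> a \<bullet> v}"

lemma compact_solid_cone:
  fixes a :: "'a::euclidean_space"
  shows "compact (solid_cone a c r)"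
proof -
  have "closed (solid_cone a c r)"
    unfolding solid_cone_def Collect_conj_eq by (intro closed_Int closed_Collect_le continuous_intros)
  moreover have "bounded (solid_cone a c r)"
    by (rule bounded_subset[OF bounded_cball[of 0 r]]) (auto simp: solid_cone_def)
  ultimately show ?thesis by (simp add: compact_eq_bounded_closed)
qed

lemma emeasure_solid_cone_Basis_le:
  fixes e :: "'a::euclidean_space"
  assumes "e \<in> Basis" "DIM('a) \<ge> 3" "r > 0" "0 \<le> c" "c \<le> 1"
  shows "emeasure lborel (solid_cone e c r)
    \<le> ennreal (unit_ball_vol (real (DIM('a) - 1)) * (r * sqrt (1 - c\<^sup>2)) ^ (DIM('a) - 3) * (2/3 * r ^ 3))"
proof -
  let ?coords = "\<lambda>f. \<Sum>b\<in>Basis. f b *\<^sub>R b :: 'a"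
  have norm_coords: "norm (?coords f) = sqrt (\<Sum>i\<in>Basis. (f i)\<^sup>2)" for f
    using euclidean_dist_l2[of 0 "?coords f"] by (simp add: L2_set_def)
  have inner_coords: "?coords f \<bullet> e = f e" for f
    using \<open>e \<in> Basis\<close> by (simp add: inner_sum_left inner_Basis if_distrib cong: if_cong)
  have "emeasure lborel (solid_cone e c r)
      = emeasure (distr (Pi\<^sub>M Basis (\<lambda>_. lborel)) borel ?coords) (solid_cone e c r)"
    by (simp flip: lborel_eq)
  also have "\<dots> = emeasure (Pi\<^sub>M Basis (\<lambda>_. lborel))
      (?coords -` solid_cone e c r \<inter> space (Pi\<^sub>M Basis (\<lambda>_. lborel)))"
    using compact_solid_cone[of e c r] by (intro emeasure_distr) (auto intro: borel_compact)
  also have "?coords -` solid_cone e c r \<inter> space (Pi\<^sub>M Basis (\<lambda>_. lborel)) = PiM_cone Basis e c r"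
    using \<open>e \<in> Basis\<close> by (auto simp: PiM_cone_def solid_cone_def norm_coords inner_coords inner_commute[of e])
  also have "emeasure (Pi\<^sub>M Basis (\<lambda>_. lborel)) (PiM_cone Basis e c r)
      \<le> ennreal (unit_ball_vol (real (DIM('a) - 1)) * (r * sqrt (1 - c\<^sup>2)) ^ (DIM('a) - 3) * (2/3 * r ^ 3))"
    using assms by (intro emeasure_PiM_cone_le) auto
  finally show ?thesis .
qed

lemma solid_cone_orthogonal_transformation:
  fixes f :: "'a::euclidean_space \<Rightarrow> 'a"
  assumes "orthogonal_transformation f"
  shows "solid_cone (f a) c r = f ` solid_cone a c r"
proof -
  have "v \<in> solid_cone (f a) c r \<longleftrightarrow> v \<in> f ` solid_cone a c r" for v
  proof -
    obtain w where "v = f w" using orthogonal_transformation_surj[OF assms] by (metis surjD)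
    moreover have "inj f" by (rule orthogonal_transformation_inj[OF assms])
    ultimately show ?thesis using assms
      by (auto simp: solid_cone_def orthogonal_transformation_norm inj_image_mem_iff
          orthogonal_transformation_def[of f])
  qed
  then show ?thesis by blast
qed

lemma solid_cone_scaleR:
  assumes "k > 0"
  shows "solid_cone (k *\<^sub>R a) c r = solid_cone a c r"
proof -
  have "c * norm (k *\<^sub>R a) * norm v \<le> k *\<^sub>R a \<bullet> v \<longleftrightarrow> c * norm a * norm v \<le> a \<bullet> v" for v
    using mult_le_cancel_left_pos[OF assms, of "c * norm a * norm v" "a \<bullet> v"] assms
    by (simp add: mult_ac)
  then show ?thesis by (simp add: solid_cone_def)
qed

lemma measure_solid_cone_le_wellorder:
  fixes a :: "real ^ 'n::{finite,wellorder}"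
  assumes "a \<noteq> 0" "CARD('n) \<ge> 3" "r > 0" "0 \<le> c" "c \<le> 1"
  shows "measure lborel (solid_cone a c r)
    \<le> unit_ball_vol (real (CARD('n) - 1)) * (r * sqrt (1 - c\<^sup>2)) ^ (CARD('n) - 3) * (2/3 * r ^ 3)"
proof -
  define e where "e = axis (undefined :: 'n) (1 :: real)"
  obtain f where f: "orthogonal_transformation f" "f (norm a *\<^sub>R e) = a"
    using orthogonal_transformation_exists[of "norm a *\<^sub>R e" a] by (auto simp: e_def)
  have cone_image: "solid_cone a c r = f ` solid_cone e c r"
    using solid_cone_orthogonal_transformation[OF f(1), of "norm a *\<^sub>R e"] f(2)
      solid_cone_scaleR[of "norm a" e] \<open>a \<noteq> 0\<close> by simp
  have cone_e: "solid_cone e c r \<in> lmeasurable"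
    by (rule lmeasurable_compact[OF compact_solid_cone])
  have "measure lborel (solid_cone a c r) = measure lebesgue (solid_cone a c r)"
    using compact_solid_cone[of a c r] by (simp add: borel_compact)
  also have "\<dots> = measure lebesgue (solid_cone e c r)"
    unfolding cone_image by (rule measure_orthogonal_image[OF f(1) cone_e])
  also have "\<dots> = measure lborel (solid_cone e c r)"
    using compact_solid_cone[of e c r] by (simp add: borel_compact)
  also have "\<dots> \<le> unit_ball_vol (real (CARD('n) - 1)) * (r * sqrt (1 - c\<^sup>2)) ^ (CARD('n) - 3) * (2/3 * r ^ 3)"
    unfolding measure_def using assms emeasure_solid_cone_Basis_le[of e r c]
    by (intro enn2real_leI) (auto simp: e_def power_le_one)
  finally show ?thesis .
qed

text \<open>\<open>measure_orthogonal_image\<close> requires an index type of class \<open>wellorder\<close>; an arbitrary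
  finite index type is replaced by a copy ordered through \<open>to_nat\<close>, with a measure preserving
  isometry between the two coordinate spaces.\<close>

typedef 'a well_ordered = "UNIV :: 'a set" ..

instantiation well_ordered :: (finite) linorder
begin

definition less_eq_well_ordered :: "'a well_ordered \<Rightarrow> 'a well_ordered \<Rightarrow> bool" where
  "x \<le> y \<longleftrightarrow> to_nat (Rep_well_ordered x) \<le> to_nat (Rep_well_ordered y)"

definition less_well_ordered :: "'a well_ordered \<Rightarrow> 'a well_ordered \<Rightarrow> bool" where
  "x < y \<longleftrightarrow> to_nat (Rep_well_ordered x) < to_nat (Rep_well_ordered y)"

instance
proof
  fix x y :: "'a well_ordered"
  assume "x \<le> y" "y \<le> x"
  then have "to_nat (Rep_well_ordered x) = to_nat (Rep_well_ordered y)"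
    by (simp add: less_eq_well_ordered_def)
  then show "x = y"
    by (simp add: Rep_well_ordered_inject)
qed (auto simp: less_eq_well_ordered_def less_well_ordered_def)

end

instance well_ordered :: (finite) finite
proof
  have "UNIV = Abs_well_ordered ` (UNIV :: 'a set)"
    by (simp add: type_definition.Abs_image[OF type_definition_well_ordered])
  then show "finite (UNIV :: 'a well_ordered set)"
    by (metis finite finite_imageI)
qed

instance well_ordered :: (finite) wellorder
proof -
  have "{(x :: 'a well_ordered, y). x < y} = inv_image {(m, n). m < n} (\<lambda>x. to_nat (Rep_well_ordered x))"
    by (auto simp: less_well_ordered_def)
  then have "wf {(x :: 'a well_ordered, y). x < y}"
    by (metis wf_less wf_inv_image)
  then show "OFCLASS('a well_ordered, wellorder_class)"
    by (rule wf_wellorderI) intro_classes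
qed

lemma bij_Rep_well_ordered: "bij Rep_well_ordered"
  by (rule bij_betwI[where g = Abs_well_ordered]) (auto simp: Rep_well_ordered_inverse Abs_well_ordered_inverse)

lemma bij_Abs_well_ordered: "bij Abs_well_ordered"
  by (rule bij_betwI[where g = Rep_well_ordered]) (auto simp: Rep_well_ordered_inverse Abs_well_ordered_inverse)

lemma all_well_ordered_iff: "(\<forall>j. P j) \<longleftrightarrow> (\<forall>i. P (Abs_well_ordered i))"
  by (metis Rep_well_ordered_inverse)

lemma card_well_ordered: "CARD('a well_ordered) = CARD('a)"
  using bij_betw_same_card[OF bij_Rep_well_ordered] .

definition vec_of_well_ordered :: "real ^ 'n well_ordered \<Rightarrow> real ^ 'n" where
  "vec_of_well_ordered w = (\<chi> i. w $ Abs_well_ordered i)"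

definition vec_to_well_ordered :: "real ^ 'n \<Rightarrow> real ^ 'n well_ordered" where
  "vec_to_well_ordered v = (\<chi> j. v $ Rep_well_ordered j)"

lemma vec_of_to_well_ordered [simp]: "vec_of_well_ordered (vec_to_well_ordered v) = v"
  by (simp add: vec_of_well_ordered_def vec_to_well_ordered_def Abs_well_ordered_inverse vec_eq_iff)

lemma inner_vec_of_well_ordered:
  "vec_of_well_ordered v \<bullet> vec_of_well_ordered w = v \<bullet> (w :: real ^ 'n::finite well_ordered)"
  unfolding inner_vec_def vec_of_well_ordered_def
  using sum.reindex_bij_betw[OF bij_Abs_well_ordered, of "\<lambda>j. v $ j * w $ j"] by simp

lemma norm_vec_of_well_ordered: "norm (vec_of_well_ordered v) = norm (v :: real ^ 'n::finite well_ordered)"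
  by (simp add: norm_eq_sqrt_inner inner_vec_of_well_ordered)

lemma prod_Basis_vec: "(\<Prod>b\<in>Basis. (u - l) \<bullet> b) = (\<Prod>i\<in>UNIV. u $ i - l $ i)"
  for u l :: "real ^ 'n::finite"
  by (simp add: Basis_vec_def axis_eq_axis prod.UNION_disjoint inner_axis inner_axis')

lemma vimage_vec_of_well_ordered_box:
  "vec_of_well_ordered -` box l u = box (vec_to_well_ordered l) (vec_to_well_ordered u)"
  unfolding set_eq_iff mem_box_cart vimage_eq vec_of_well_ordered_def vec_to_well_ordered_def
  by (simp add: all_well_ordered_iff Abs_well_ordered_inverse)

lemma measurable_vec_of_well_ordered:
  "vec_of_well_ordered \<in> measurable (lborel :: (real ^ 'n::finite well_ordered) measure) borel"
proof -
  have "linear (vec_of_well_ordered :: real ^ 'n well_ordered \<Rightarrow> real ^ 'n)"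
    by (rule linearI) (simp_all add: vec_of_well_ordered_def vec_eq_iff)
  then show ?thesis
    by (simp add: borel_measurable_continuous_onI linear_continuous_on linear_linear)
qed

lemma lborel_distr_vec_of_well_ordered:
  "distr lborel borel vec_of_well_ordered = (lborel :: (real ^ 'n::finite) measure)"
proof (rule lborel_eqI[symmetric])
  fix l u :: "real ^ 'n" assume le: "\<And>b. b \<in> Basis \<Longrightarrow> l \<bullet> b \<le> u \<bullet> b"
  have "l $ i \<le> u $ i" for i
    using le[of "axis i 1"] by (simp add: inner_axis)
  then have le': "\<forall>b\<in>Basis. vec_to_well_ordered l \<bullet> b \<le> vec_to_well_ordered u \<bullet> b"
    by (auto simp: Basis_vec_def inner_axis vec_to_well_ordered_def)
  have "emeasure (distr lborel borel vec_of_well_ordered) (box l u)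
      = emeasure lborel (box (vec_to_well_ordered l) (vec_to_well_ordered u))"
    by (subst emeasure_distr[OF measurable_vec_of_well_ordered])
       (simp_all add: vimage_vec_of_well_ordered_box)
  also have "\<dots> = (\<Prod>j\<in>UNIV. u $ Rep_well_ordered j - l $ Rep_well_ordered j)"
    using le' by (simp add: emeasure_lborel_box_eq prod_Basis_vec vec_to_well_ordered_def)
  also have "\<dots> = (\<Prod>b\<in>Basis. (u - l) \<bullet> b)"
    unfolding prod_Basis_vec using prod.reindex_bij_betw[OF bij_Rep_well_ordered, of "\<lambda>i. u $ i - l $ i"] by simp
  finally show "emeasure (distr lborel borel vec_of_well_ordered) (box l u) = (\<Prod>b\<in>Basis. (u - l) \<bullet> b)" .
qed simp

lemma measure_solid_cone_le:
  fixes a :: "real ^ 'n::finite"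
  assumes "a \<noteq> 0" "CARD('n) \<ge> 3" "r > 0" "0 \<le> c" "c \<le> 1"
  shows "measure lborel (solid_cone a c r)
    \<le> unit_ball_vol (real (CARD('n) - 1)) * (r * sqrt (1 - c\<^sup>2)) ^ (CARD('n) - 3) * (2/3 * r ^ 3)"
proof -
  let ?a = "vec_to_well_ordered a"
  have "measure lborel (solid_cone a c r)
      = measure (distr lborel borel vec_of_well_ordered) (solid_cone a c r)"
    by (simp add: lborel_distr_vec_of_well_ordered)
  also have "\<dots> = measure lborel (vec_of_well_ordered -` solid_cone a c r \<inter> space lborel)"
    using compact_solid_cone[of a c r]
    by (intro measure_distr measurable_vec_of_well_ordered) (simp add: borel_compact)
  also have "vec_of_well_ordered -` solid_cone a c r \<inter> space lborel = solid_cone ?a c r"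
    using inner_vec_of_well_ordered[of ?a] norm_vec_of_well_ordered[of ?a]
    by (auto simp: solid_cone_def norm_vec_of_well_ordered)
  also have "measure lborel (solid_cone ?a c r)
      \<le> unit_ball_vol (real (CARD('n well_ordered) - 1))
        * (r * sqrt (1 - c\<^sup>2)) ^ (CARD('n well_ordered) - 3) * (2/3 * r ^ 3)"
  proof (rule measure_solid_cone_le_wellorder)
    show "?a \<noteq> 0"
      using norm_vec_of_well_ordered[of ?a] \<open>a \<noteq> 0\<close> by auto
  qed (use assms in \<open>simp_all add: card_well_ordered\<close>)
  finally show ?thesis
    by (simp add: card_well_ordered)
qed

lemma measure_unif_sphere_le:
  fixes S T :: "'a::euclidean_space set"
  assumes "r > 0" "S \<in> sets borel" "compact T"
    and cover: "\<And>v. v \<in> ball 0 r \<Longrightarrow> (r / norm v) *\<^sub>R v \<in> S \<Longrightarrow> v \<in> T"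
  shows "measure (unif_sphere r) S \<le> measure lborel T / (unit_ball_vol DIM('a) * r ^ DIM('a))"
proof -
  let ?proj = "\<lambda>v::'a. (r / norm v) *\<^sub>R v"
  let ?U = "uniform_measure lborel (ball (0::'a) r)"
  have proj: "?proj \<in> borel_measurable borel"
    by measurable
  then have "?proj \<in> measurable ?U borel"
    by (simp cong: measurable_cong_sets)
  then have "measure (unif_sphere r) S = measure ?U (?proj -` S \<inter> space ?U)"
    unfolding unif_sphere_def using \<open>S \<in> sets borel\<close> by (rule measure_distr)
  also have "\<dots> = measure lborel (ball 0 r \<inter> ?proj -` S) / measure lborel (ball (0::'a) r)"
  proof (simp, rule measure_uniform_measure)
    have "emeasure lborel (ball (0::'a) r) = ennreal (unit_ball_vol DIM('a) * r ^ DIM('a))"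
      using emeasure_ball[of r "0::'a"] \<open>r > 0\<close> by simp
    then show "emeasure lborel (ball (0::'a) r) \<noteq> 0" "emeasure lborel (ball (0::'a) r) \<noteq> \<infinity>"
      using \<open>r > 0\<close> by (simp_all add: ennreal_eq_0_iff not_le)
    show "?proj -` S \<in> sets lborel"
      using measurable_sets[OF proj \<open>S \<in> sets borel\<close>] by simp
  qed
  also have "measure lborel (ball (0::'a) r) = unit_ball_vol DIM('a) * r ^ DIM('a)"
    using content_ball[of r "0::'a"] \<open>r > 0\<close> by simp
  also have "measure lborel (ball 0 r \<inter> ?proj -` S) / \<dots>
      \<le> measure lborel T / (unit_ball_vol DIM('a) * r ^ DIM('a))"
  proof (rule divide_right_mono)
    have "ball 0 r \<inter> ?proj -` S \<in> sets lborel"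
      using measurable_sets[OF proj \<open>S \<in> sets borel\<close>] by simp
    then show "measure lborel (ball 0 r \<inter> ?proj -` S) \<le> measure lborel T"
      using cover fmeasurable_compact[OF \<open>compact T\<close>] by (intro measure_mono_fmeasurable) auto
  qed (use \<open>r > 0\<close> in simp)
  finally show ?thesis .
qed

lemma radial_projection_in_solid_cone:
  fixes x v :: "'a::real_inner"
  assumes "r > 0" "norm v \<le> r" and dist: "(norm (x - (r / norm v) *\<^sub>R v))\<^sup>2 \<le> d"
    and c: "c * norm x * (2 * r) \<le> (norm x)\<^sup>2 + r\<^sup>2 - d"
  shows "v \<in> solid_cone x c r"
proof (cases "v = 0")
  case False
  let ?p = "(r / norm v) *\<^sub>R v"
  have "(norm (x - p))\<^sup>2 = (norm x)\<^sup>2 - 2 * (x \<bullet> p) + (norm p)\<^sup>2" for p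
    by (simp add: power2_norm_eq_inner inner_diff_left inner_diff_right inner_commute)
  moreover have "norm ?p = r" using False \<open>r > 0\<close> by simp
  ultimately have "(norm (x - ?p))\<^sup>2 = (norm x)\<^sup>2 - 2 * (x \<bullet> ?p) + r\<^sup>2"
    by simp
  with dist c have "c * norm x * (2 * r) * norm v \<le> 2 * (x \<bullet> ?p) * norm v"
    by (intro mult_right_mono) auto
  also have "\<dots> = (2 * r) * (x \<bullet> v)"
    using False by simp
  finally have "(2 * r) * (c * norm x * norm v) \<le> (2 * r) * (x \<bullet> v)"
    by (simp add: mult_ac)
  then have "c * norm x * norm v \<le> x \<bullet> v"
    by (rule mult_left_le_imp_le) (use \<open>r > 0\<close> in simp)
  then show ?thesis
    using \<open>norm v \<le> r\<close> by (simp add: solid_cone_def)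
qed (use \<open>r > 0\<close> in \<open>simp add: solid_cone_def\<close>)

lemma unit_ball_vol_ratio:
  assumes "n \<ge> (3::nat)"
  shows "unit_ball_vol (real n - 1) / unit_ball_vol (real n)
       = real n / (real n - 1) * (1 / sqrt pi * (Gamma (real n / 2) / Gamma ((real n - 1) / 2)))"
proof -
  define a where "a = (real n - 1) / 2"
  define b where "b = real n / 2"
  have "a > 0" "b > 0" using assms by (auto simp: a_def b_def)
  have Gamma_a: "Gamma (a + 1) = a * Gamma a"
    using \<open>a > 0\<close> nonpos_Ints_nonpos[of a] by (intro Gamma_plus1) force
  have Gamma_b: "Gamma (b + 1) = b * Gamma b"
    using \<open>b > 0\<close> nonpos_Ints_nonpos[of b] by (intro Gamma_plus1) force
  have "Gamma a > 0" using \<open>a > 0\<close> by (rule Gamma_real_pos)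
  have "pi powr a / pi powr b = pi powr (a - b)" by (simp add: powr_diff)
  also have "a - b = - (1/2)" by (simp add: a_def b_def field_simps)
  also have "pi powr (- (1/2)) = inverse (pi powr (1/2))" by (rule powr_minus)
  also have "pi powr (1/2) = sqrt pi" using powr_half_sqrt[of pi] by simp
  finally have pi_powr: "pi powr a / pi powr b = 1 / sqrt pi" by (simp add: inverse_eq_divide)
  have "unit_ball_vol (real n - 1) / unit_ball_vol (real n)
      = (pi powr a / Gamma (a + 1)) / (pi powr b / Gamma (b + 1))"
    by (simp add: unit_ball_vol_def a_def b_def)
  also have "\<dots> = (pi powr a / pi powr b) * (Gamma (b + 1) / Gamma (a + 1))"
    by (simp add: field_simps)
  also have "\<dots> = 1 / sqrt pi * ((b * Gamma b) / (a * Gamma a))"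
    by (simp add: pi_powr Gamma_a Gamma_b)
  also have "\<dots> = b / a * (1 / sqrt pi * (Gamma b / Gamma a))"
    using \<open>a > 0\<close> \<open>Gamma a > 0\<close> by (simp add: field_simps)
  also have "b / a = real n / (real n - 1)"
    using assms by (simp add: a_def b_def field_simps)
  finally show ?thesis by (simp add: a_def b_def)
qed

lemma solid_cone_ball_volume_ratio_le:
  assumes "n \<ge> 3" "r > 0" "0 \<le> s"
  shows "unit_ball_vol (real (n - 1)) * (r * s) ^ (n - 3) * (2/3 * r ^ 3) / (unit_ball_vol (real n) * r ^ n)
    \<le> 1 / sqrt pi * (Gamma (real n / 2) / Gamma ((real n - 1) / 2)) * s ^ (n - 3)"
proof -
  define G where "G = 1 / sqrt pi * (Gamma (real n / 2) / Gamma ((real n - 1) / 2))"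
  have "G \<ge> 0"
    using \<open>n \<ge> 3\<close> by (auto simp: G_def intro!: Gamma_real_nonneg)
  have "r ^ n = r ^ 3 * r ^ (n - 3)"
    using \<open>n \<ge> 3\<close> by (simp add: power_add[symmetric])
  then have "unit_ball_vol (real (n - 1)) * (r * s) ^ (n - 3) * (2/3 * r ^ 3) / (unit_ball_vol (real n) * r ^ n)
      = 2/3 * (unit_ball_vol (real n - 1) / unit_ball_vol (real n)) * s ^ (n - 3)"
    using \<open>n \<ge> 3\<close> \<open>r > 0\<close> by (simp add: of_nat_diff power_mult_distrib field_simps)
  also have "\<dots> = 2/3 * (real n / (real n - 1)) * (G * s ^ (n - 3))"
    unfolding unit_ball_vol_ratio[OF \<open>n \<ge> 3\<close>] G_def by (simp only: mult.assoc)
  also have "\<dots> \<le> 1 * (G * s ^ (n - 3))"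
    using \<open>n \<ge> 3\<close> \<open>G \<ge> 0\<close> \<open>0 \<le> s\<close> by (intro mult_right_mono) (auto simp: field_simps)
  finally show ?thesis by (simp add: G_def)
qed

lemma measure_sphere_cap_le:
  fixes x :: "real ^ 'n::finite"
  assumes "x \<noteq> 0" "CARD('n) \<ge> 3" "r > 0" "0 \<le> c" "c \<le> 1"
    and angle: "c * norm x * (2 * r) \<le> (norm x)\<^sup>2 + r\<^sup>2 - d"
  shows "measure (unif_sphere r) {y. (norm (x - y))\<^sup>2 \<le> d}
    \<le> 1 / sqrt pi * (Gamma (real CARD('n) / 2) / Gamma ((real CARD('n) - 1) / 2))
        * sqrt (1 - c\<^sup>2) ^ (CARD('n) - 3)"
proof -
  let ?n = "CARD('n)"
  have "measure (unif_sphere r) {y. (norm (x - y))\<^sup>2 \<le> d}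
      \<le> measure lborel (solid_cone x c r) / (unit_ball_vol ?n * r ^ ?n)"
    using \<open>r > 0\<close> radial_projection_in_solid_cone[of r _ x d c] angle
    by (intro measure_unif_sphere_le[THEN order_trans])
       (auto intro: compact_solid_cone borel_closed closed_Collect_le continuous_intros)
  also have "\<dots> \<le> unit_ball_vol (real (?n - 1)) * (r * sqrt (1 - c\<^sup>2)) ^ (?n - 3) * (2/3 * r ^ 3)
      / (unit_ball_vol ?n * r ^ ?n)"
    using measure_solid_cone_le[of x r c] assms \<open>r > 0\<close> by (intro divide_right_mono) simp_all
  also have "\<dots> \<le> 1 / sqrt pi * (Gamma (real ?n / 2) / Gamma ((real ?n - 1) / 2)) * sqrt (1 - c\<^sup>2) ^ (?n - 3)"
    using assms by (intro solid_cone_ball_volume_ratio_le) (auto simp: power_le_one)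
  finally show ?thesis .
qed

lemma hfun_cosine:
  assumes "\<sigma>\<^sup>2 > D" "z > 0" "z + \<sigma>\<^sup>2 - 2 * D \<ge> 0" "hfun \<sigma> D z \<le> 1"
  obtains c where "0 \<le> c" "c \<le> 1" "hfun \<sigma> D z = c\<^sup>2"
    "2 * c * sqrt (z * (\<sigma>\<^sup>2 - D)) = z + (\<sigma>\<^sup>2 - D) - D"
proof
  define P where "P = \<sigma>\<^sup>2 - D"
  have "z * P > 0" "z \<noteq> 0" "\<sigma>\<^sup>2 \<noteq> D" using assms by (simp_all add: P_def)
  define c where "c = (z + P - D) / (2 * sqrt (z * P))"
  show "0 \<le> c" using assms \<open>z * P > 0\<close> by (simp add: c_def P_def)
  show hfun: "hfun \<sigma> D z = c\<^sup>2"
    using \<open>z * P > 0\<close> \<open>z \<noteq> 0\<close> \<open>\<sigma>\<^sup>2 \<noteq> D\<close>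
    by (simp add: hfun_def c_def P_def power_divide power_mult_distrib mult.assoc)
  show "c \<le> 1"
    using hfun assms(4) \<open>0 \<le> c\<close> by (metis power2_le_imp_le one_power2 zero_le_one)
  show "2 * c * sqrt (z * (\<sigma>\<^sup>2 - D)) = z + (\<sigma>\<^sup>2 - D) - D"
    using \<open>z * P > 0\<close> \<open>z \<noteq> 0\<close> \<open>\<sigma>\<^sup>2 \<noteq> D\<close> by (simp add: c_def P_def)
qed

theorem mainTheorem8:
  fixes \<sigma> D z :: real and n :: nat and x :: "real ^ 'n"
  assumes "\<sigma>\<^sup>2 > D" and "D > 0"
    and "CARD('n) = n" and "n \<ge> 3"
    and "z > 0" and "z + \<sigma>\<^sup>2 - 2 * D \<ge> 0" and "hfun \<sigma> D z \<le> 1"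
    and "(norm x)\<^sup>2 / real n = z"
  shows "measure (unif_sphere (sqrt (real n * (\<sigma>\<^sup>2 - D)))) {y. (norm (x - y))\<^sup>2 \<le> real n * D}
     \<le> 1 / sqrt pi * (Gamma (real n / 2) / Gamma ((real n - 1) / 2))
        * (sqrt (1 - hfun \<sigma> D z)) ^ (n - 3)"
proof -
  obtain c where c: "0 \<le> c" "c \<le> 1" "hfun \<sigma> D z = c\<^sup>2"
      "2 * c * sqrt (z * (\<sigma>\<^sup>2 - D)) = z + (\<sigma>\<^sup>2 - D) - D"
    using hfun_cosine assms(1,5,6,7) by blast
  define r where "r = sqrt (real n * (\<sigma>\<^sup>2 - D))"
  have "r > 0" "r\<^sup>2 = real n * (\<sigma>\<^sup>2 - D)"
    using assms(1,4) by (simp_all add: r_def)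
  have norm_x: "norm x = sqrt (real n * z)" "(norm x)\<^sup>2 = real n * z" "x \<noteq> 0"
    using assms(4,5,8) by (auto simp: field_simps real_sqrt_unique)
  have "norm x * r = sqrt ((real n)\<^sup>2 * (z * (\<sigma>\<^sup>2 - D)))"
    by (simp add: norm_x(1) r_def real_sqrt_mult[symmetric] power2_eq_square mult_ac)
  also have "\<dots> = real n * sqrt (z * (\<sigma>\<^sup>2 - D))"
    by (simp add: real_sqrt_mult)
  finally have "c * norm x * (2 * r) = real n * (z + (\<sigma>\<^sup>2 - D) - D)"
    using c(4) by (metis mult.commute mult.left_commute)
  also have "\<dots> = (norm x)\<^sup>2 + r\<^sup>2 - real n * D"
    using norm_x(2) \<open>r\<^sup>2 = _\<close> by (simp add: algebra_simps)
  finally have "c * norm x * (2 * r) \<le> (norm x)\<^sup>2 + r\<^sup>2 - real n * D" by simp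
  then have "measure (unif_sphere r) {y. (norm (x - y))\<^sup>2 \<le> real n * D}
      \<le> 1 / sqrt pi * (Gamma (real n / 2) / Gamma ((real n - 1) / 2)) * sqrt (1 - c\<^sup>2) ^ (n - 3)"
    using measure_sphere_cap_le[of x r c] norm_x(3) c(1,2) \<open>r > 0\<close> assms(3,4) by simp
  then show ?thesis
    unfolding r_def c(3) .
qed

end
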